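(* Let $\{W_n\}_{n\ge0}$ be an Appell monic polynomial sequence with cubic decomposition $W_{3n}(x)=P_n(x^3)+xa^1_{n-1}(x^3)+x^2a^2_{n-1}(x^3)$, $W_{3n+1}(x)=b^1_n(x^3)+xQ_n(x^3)+x^2b^2_{n-1}(x^3)$, $W_{3n+2}(x)=c^1_n(x^3)+xc^2_n(x^3)+x^2R_n(x^3)$ (components as in the context). (1) Either the three sequences $\{a^1_n\}_{n\ge0}$, $\{c^1_n\}_{n\ge0}$, $\{b^2_n\}_{n\ge0}$ are all identically the null sequence, or they are all non-null, and in this case there are a non-negative integer $\kappa$ and numerical sequences $\mu_{1,n},\mu_{2,n},\mu_{3,n}$ such that for $n\ge0$ $$b^2_{n+\kappa}(x)=\mu_{1,n}\hat b^2_n(x),\quad a^1_{n+\kappa}(x)=\mu_{2,n}\hat a^1_n(x),\quad c^1_{n+\kappa}(x)=\mu_{3,n}\hat c^1_n(x),$$ where $\{\hat a^1_n\},\{\hat c^1_n\},\{\hat b^2_n\}$ are monic polynomial sequences. (2) Either the three sequences $\{a^2_n\}_{n\ge0}$, $\{c^2_n\}_{n\ge0}$, $\{b^1_n\}_{n\ge0}$ are all identically null, or they are all non-null, and in this case there are a non-negative integer $\tau$ and numerical sequences $\alpha_{1,n},\alpha_{2,n},\alpha_{3,n}$ such that for $n\ge0$ $$a^2_{n+\tau}(x)=\alpha_{1,n}\hat a^2_n(x),\quad c^2_{n+\tau}(x)=\alpha_{2,n}\hat c^2_n(x),\quad b^1_{n+\tau}(x)=\alpha_{3,n}\hat b^1_n(x),$$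 where $\{\hat a^2_n\},\{\hat c^2_n\},\{\hat b^1_n\}$ are monic polynomial sequences. (3) Furthermore, there are two nonzero constants $b^2_\kappa$ and $a^2_\tau$ such that $\mu_{1,n}=\frac{(\kappa+\frac73)_n(\kappa+\frac53)_n}{(\frac43)_n(\frac53)_n}\binom{n+\kappa+1}{n}b^2_\kappa$ for $n\ge0$; $\mu_{2,n}=\frac{(\kappa+\frac73)_{n-1}(\kappa+\frac53)_n}{(\frac43)_n(\frac53)_{n-1}}\binom{n+\kappa+1}{n}b^2_\kappa$ for $n\ge1$; $\mu_{3,n}=\frac{(\kappa+\frac73)_{n-1}(\kappa+\frac53)_n}{(\frac43)_{n-1}(\frac53)_{n-1}}\binom{n+\kappa}{n}\frac{b^2_\kappa}{\kappa+1}$ for $n\ge1$; $\alpha_{1,n}=\frac{(\tau+\frac53)_n(\tau+\frac43)_n}{(\frac43)_n(\frac53)_n}\binom{n+\tau+1}{n}a^2_\tau$ for $n\ge0$; $\alpha_{2,n}=\frac{(\tau+\frac53)_n(\tau+\frac43)_n}{(\frac43)_n(\frac53)_{n-1}}\binom{n+\tau}{n}\frac{a^2_\tau}{\tau+1}$ for $n\ge1$; $\alpha_{3,n}=\frac{(\tau+\frac53)_{n-1}(\tau+\frac43)_n}{(\frac43)_{n-1}(\frac53)_{n-1}}\binom{n+\tau}{n}\frac{a^2_\tau}{\tau+1}$ for $n\ge1$; with $\mu_{2,0}=\frac{2b^2_\kappa}{3(\kappa+\frac43)}$, $\mu_{3,0}=\frac{2b^2_\kappa}{9(\kappa+1)(\kappa+\frac43)}$,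 $\alpha_{2,0}=\frac{2a^2_\tau}{3(\tau+1)}$, $\alpha_{3,0}=\frac{2a^2_\tau}{9(\tau+1)(\tau+\frac23)}$.
   Context: An MPS is a sequence $\{W_n\}_{n\ge0}$ of complex polynomials with $W_n$ monic of degree $n$; it is Appell if $W_{n+1}'=(n+1)W_n$ for $n\ge0$. Cubic decomposition: for any MPS there are unique polynomials with the displayed identities for all $n\ge0$, where $\{P_n\},\{Q_n\},\{R_n\}$ are MPSs and $\deg a^1_{n-1},\deg a^2_{n-1},\deg b^2_{n-1}\le n-1$, $\deg b^1_n,\deg c^1_n,\deg c^2_n\le n$, with $a^1_{-1}=a^2_{-1}=b^2_{-1}=0$. $(a)_n$ denotes the Pochhammer symbol $(a)_n=a(a+1)\cdots(a+n-1)$ for $n\ge1$, $(a)_0=1$. *)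

theory Defs
  imports "HOL-Computational_Algebra.Polynomial"
begin

definition MPS :: "(nat \<Rightarrow> complex poly) \<Rightarrow> bool" where
  "MPS W \<longleftrightarrow> (\<forall>n. degree (W n) = n \<and> lead_coeff (W n) = 1)"

definition Appell :: "(nat \<Rightarrow> complex poly) \<Rightarrow> bool" where
  "Appell W \<longleftrightarrow> MPS W \<and> (\<forall>n. pderiv (W (Suc n)) = smult (of_nat (Suc n)) (W n))"

definition cube_sub :: "complex poly \<Rightarrow> complex poly" where
  "cube_sub p = pcompose p (monom 1 3)"

end

theory Submission
  imports Defs
begin

text \<open>
  The coefficients of an Appell sequence are determined by its constant terms w k = W k (0):
  the coefficient of x^j in W n is (n choose j) * w (n - j). Reading this off the cubic
  decomposition, the j-th coefficient of a1 m, c1 m and b2 m is a binomial coefficient times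
  w (3(m - j) + 2), and that of a2 m, c2 m and b1 m a binomial coefficient times w (3(m - j) + 1).
  Hence each triple vanishes exactly when the corresponding subsequence of w does. Otherwise let
  kappa be the first index with w (3 kappa + 2) \<noteq> 0: the component of index n + kappa has
      degree n
  and leading coefficient ((3(n + kappa) + c) choose (3n + d)) * w (3 kappa + 2), and the
  triplication formula (z)_3n = 27^n (z/3)_n ((z+1)/3)_n ((z+2)/3)_n turns these binomial
  coefficients into the stated Pochhammer quotients.
\<close>

section \<open>Binomial coefficients along steps of three\<close>

lemma binomial_shift_pochhammer:
  "of_nat ((a + m) choose (b + m)) * pochhammer (of_nat b + 1) m
     = pochhammer (of_nat a + 1) m * (of_nat (a choose b) :: 'a :: comm_semiring_1)"
proof (induction m)
  case 0 then show ?case by simp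
next
  case (Suc m)
  have "((a + Suc m) choose (b + Suc m)) * (b + 1 + m) = (a + 1 + m) * ((a + m) choose (b + m))"
    using Suc_times_binomial_eq[of "a + m" "b + m"] by (simp del: binomial_Suc_Suc)
  from arg_cong[OF this, of "of_nat :: nat \<Rightarrow> 'a"]
  have absorb: "of_nat ((a + Suc m) choose (b + Suc m)) * (of_nat b + 1 + of_nat m)
      = (of_nat a + 1 + of_nat m) * (of_nat ((a + m) choose (b + m)) :: 'a)"
    by (simp only: of_nat_mult of_nat_add of_nat_1)
  have "of_nat ((a + Suc m) choose (b + Suc m)) * pochhammer (of_nat b + 1) (Suc m)
      = (of_nat ((a + Suc m) choose (b + Suc m)) * (of_nat b + 1 + of_nat m))
          * (pochhammer (of_nat b + 1) m :: 'a)"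
    unfolding pochhammer_Suc by (simp only: ac_simps)
  also have "\<dots> = (of_nat a + 1 + of_nat m)
      * (of_nat ((a + m) choose (b + m)) * pochhammer (of_nat b + 1) m)"
    unfolding absorb by (simp only: mult.assoc)
  also have "\<dots> = pochhammer (of_nat a + 1) (Suc m) * of_nat (a choose b)"
    unfolding Suc.IH pochhammer_Suc by (simp only: ac_simps)
  finally show ?case .
qed

lemma pochhammer_triple:
  fixes z :: "'a :: field_char_0"
  shows "pochhammer z (3 * n)
           = 27 ^ n * pochhammer (z / 3) n * pochhammer ((z + 1) / 3) n
               * pochhammer ((z + 2) / 3) n"
proof (induction n)
  case 0 then show ?case by simp
next
  case (Suc n)
  have "pochhammer z (3 * Suc n)
      = pochhammer z (3 * n) * ((z + of_nat (3*n)) * (z + of_nat (3*n) + 1) * (z + of_nat (3*n) + 2))"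
    by (simp add: pochhammer_product' pochhammer_Suc numeral_3_eq_3 algebra_simps)
  then show ?case
    using Suc.IH by (simp add: pochhammer_Suc field_simps)
qed

lemma pochhammer_of_nat_plus_one:
  "pochhammer (of_nat k + 1 :: 'a :: field_char_0) n = fact n * of_nat ((n + k) choose n)"
  by (simp add: binomial_gbinomial gbinomial_pochhammer' of_nat_add)

lemma of_nat_add_fraction_neq_0:
  "of_nat k + of_nat (Suc a) / of_nat (Suc b) \<noteq> (0 :: 'a :: field_char_0)"
proof
  assume "of_nat k + of_nat (Suc a) / of_nat (Suc b) = (0 :: 'a)"
  then have "of_nat (Suc a) + of_nat k * of_nat (Suc b) = (0 :: 'a)"
    by (simp add: field_simps del: of_nat_Suc)
  then have "(of_nat (Suc a + k * Suc b) :: 'a) = 0"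
    by (simp only: of_nat_add of_nat_mult)
  then show False by (simp only: of_nat_eq_0_iff)
qed

lemma pochhammer_fraction_neq_0:
  "pochhammer (of_nat k + of_nat (Suc a) / of_nat (Suc b) :: 'a :: field_char_0) n \<noteq> 0"
  using of_nat_add_fraction_neq_0[of "k + _" a b, where 'a='a]
  by (auto simp: pochhammer_eq_0_iff eq_neg_iff_add_eq_0 add_ac)

lemma pochhammer_4_3_neq_0: "pochhammer (4/3 :: 'a :: field_char_0) n \<noteq> 0"
  using pochhammer_fraction_neq_0[of 0 3 2 n] by simp

lemma pochhammer_5_3_neq_0: "pochhammer (5/3 :: 'a :: field_char_0) n \<noteq> 0"
  using pochhammer_fraction_neq_0[of 0 4 2 n] by simp

lemma of_nat_choose_2: "of_nat (n choose 2) = (of_nat n * (of_nat n - 1) / 2 :: 'a :: field_char_0)"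
proof (cases n)
  case (Suc m)
  have "(Suc m choose 2) * 2 = Suc m * m"
    using Suc_times_binomial_eq[of m 1] by (simp add: numeral_2_eq_2)
  then have "of_nat (Suc m choose 2) * 2 = (of_nat (Suc m) * of_nat m :: 'a)"
    by (metis of_nat_mult of_nat_numeral)
  then show ?thesis by (simp add: Suc eq_divide_eq)
qed simp

lemma of_nat_plus_one_neq_0: "of_nat k + 1 \<noteq> (0 :: 'a :: field_char_0)"
  using of_nat_add_fraction_neq_0[of k 0 0] by simp

lemma of_nat_choose_2_div_plus_one:
  "of_nat ((3*k+4) choose 2) / (of_nat k + 1) = (3 * (3 * of_nat k + 4) / 2 :: 'a :: field_char_0)"
  "of_nat ((3*k+3) choose 2) / (of_nat k + 1) = (3 * (3 * of_nat k + 2) / 2 :: 'a)"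
  by (rule divide_eq_imp[OF of_nat_plus_one_neq_0], simp add: of_nat_choose_2 field_simps)+

text \<open>Shift by m = 3n, then split both Pochhammer symbols of length 3n by triplication.\<close>

lemma binomial_pochhammer_thirds:
  "of_nat ((3*(n+k)+c) choose (3*n+d))
     * (pochhammer ((of_nat d+1)/3) n * pochhammer ((of_nat d+2)/3) n
         * pochhammer ((of_nat d+3)/3) n)
   = pochhammer (of_nat k + (of_nat c+1)/3) n * pochhammer (of_nat k + (of_nat c+2)/3) n
       * pochhammer (of_nat k + (of_nat c+3)/3) n
           * (of_nat ((3*k+c) choose d) :: 'a :: field_char_0)"
proof -
  have triple: "pochhammer (of_nat e + 1 :: 'a) (3*n)
      = 27 ^ n * (pochhammer ((of_nat e+1)/3) n * pochhammer ((of_nat e+2)/3) n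
          * pochhammer ((of_nat e+3)/3) n)"
    for e
  proof -
    have "of_nat e + 1 + 1 = (of_nat e + 2 :: 'a)" "of_nat e + 1 + 2 = (of_nat e + 3 :: 'a)"
      by simp_all
    then show ?thesis using pochhammer_triple[of "of_nat e + 1 :: 'a" n] by (simp only: mult.assoc)
  qed
  have "of_nat ((3*k+c + 3*n) choose (d + 3*n)) * pochhammer (of_nat d + 1) (3*n)
      = pochhammer (of_nat (3*k+c) + 1) (3*n) * (of_nat ((3*k+c) choose d) :: 'a)"
    by (rule binomial_shift_pochhammer)
  moreover have "3*k+c + 3*n = 3*(n+k)+c" "d + 3*n = 3*n+d" by simp_all
  moreover have "(of_nat (3*k+c) + e) / 3 = of_nat k + (of_nat c + e) / (3 :: 'a)" for e
    by (simp add: field_simps)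
  ultimately have "27 ^ n * (of_nat ((3*(n+k)+c) choose (3*n+d))
     * (pochhammer ((of_nat d+1)/3) n * pochhammer ((of_nat d+2)/3) n
         * pochhammer ((of_nat d+3)/3) n))
   = 27 ^ n * (pochhammer (of_nat k + (of_nat c+1)/3) n * pochhammer (of_nat k + (of_nat c+2)/3) n
       * pochhammer (of_nat k + (of_nat c+3)/3) n * (of_nat ((3*k+c) choose d) :: 'a))"
    unfolding triple by (simp only: ac_simps)
  then show ?thesis by simp
qed

lemma binomial_pochhammer_thirds_4_2:
  "(of_nat ((3*(n+k)+4) choose (3*n+2)) :: 'a :: field_char_0)
     = pochhammer (of_nat k + 7/3) n * pochhammer (of_nat k + 5/3) n
       / (pochhammer (4/3) n * pochhammer (5/3) n)
       * of_nat ((n+k+1) choose n) * of_nat ((3*k+4) choose 2)"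
proof -
  have "(of_nat ((3*(n+k)+4) choose (3*n+2)) :: 'a)
      * (fact n * pochhammer (4/3) n * pochhammer (5/3) n)
      = pochhammer (of_nat k + 5/3) n * (fact n * of_nat ((n+k+1) choose n))
        * pochhammer (of_nat k + 7/3) n * of_nat ((3*k+4) choose 2)"
    using binomial_pochhammer_thirds[of n k 4 2, where 'a='a]
      pochhammer_of_nat_plus_one[of "k+1" n, where 'a='a]
    by (simp add: pochhammer_fact ac_simps)
  then show ?thesis
    by (simp add: field_simps pochhammer_4_3_neq_0 pochhammer_5_3_neq_0)
qed

lemma binomial_pochhammer_thirds_3_1_Suc:
  "(of_nat ((3*(Suc m+k)+3) choose (3*Suc m+1)) :: 'a :: field_char_0)
     = pochhammer (of_nat k + 7/3) m * pochhammer (of_nat k + 5/3) (Suc m)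
       / (pochhammer (4/3) (Suc m) * pochhammer (5/3) m)
       * of_nat ((Suc m+k+1) choose Suc m) * of_nat ((3*k+4) choose 2)"
proof -
  have "(of_nat ((3*(Suc m+k)+3) choose (3*Suc m+1)) :: 'a)
      * (pochhammer (2/3) (Suc m) * pochhammer 1 (Suc m) * pochhammer (4/3) (Suc m))
      = pochhammer (of_nat k + 4/3) (Suc m) * pochhammer (of_nat k + 5/3) (Suc m)
          * pochhammer (of_nat (k+1) + 1) (Suc m) * of_nat ((3*k+3) choose 1)"
    using binomial_pochhammer_thirds[of "Suc m" k 3 1, where 'a='a] by (simp add: add_ac)
  moreover have "pochhammer (2/3 :: 'a) (Suc m) = 2/3 * pochhammer (5/3) m"
    "pochhammer (of_nat k + 4/3 :: 'a) (Suc m) = (of_nat k + 4/3) * pochhammer (of_nat k + 7/3) m"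
    by (simp_all only: pochhammer_rec) (simp_all add: add.assoc)
  ultimately have "(of_nat ((3*(Suc m+k)+3) choose (3*Suc m+1)) :: 'a)
      * (2/3 * pochhammer (5/3) m * fact (Suc m) * pochhammer (4/3) (Suc m))
      = (of_nat k + 4/3) * pochhammer (of_nat k + 7/3) m * pochhammer (of_nat k + 5/3) (Suc m)
        * (fact (Suc m) * of_nat ((Suc m+k+1) choose Suc m)) * of_nat (3*k+3)"
    unfolding pochhammer_of_nat_plus_one pochhammer_fact[symmetric] by simp
  then have "(of_nat ((3*(Suc m+k)+3) choose (3*Suc m+1)) :: 'a)
      = (of_nat k + 4/3) * pochhammer (of_nat k + 7/3) m * pochhammer (of_nat k + 5/3) (Suc m)
        * (fact (Suc m) * of_nat ((Suc m+k+1) choose Suc m)) * of_nat (3*k+3)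
        / (2/3 * pochhammer (5/3) m * fact (Suc m) * pochhammer (4/3) (Suc m))"
    by (rule eq_divide_imp[rotated]) (simp add: pochhammer_4_3_neq_0 pochhammer_5_3_neq_0
        del: fact_Suc)
  also have "\<dots> = pochhammer (of_nat k + 7/3) m * pochhammer (of_nat k + 5/3) (Suc m)
       / (pochhammer (4/3) (Suc m) * pochhammer (5/3) m)
       * of_nat ((Suc m+k+1) choose Suc m) * of_nat ((3*k+4) choose 2)"
    by (simp add: of_nat_choose_2 field_simps pochhammer_4_3_neq_0 pochhammer_5_3_neq_0
        del: fact_Suc binomial_Suc_Suc)
  finally show ?thesis .
qed

lemma binomial_pochhammer_thirds_2_0_Suc:
  "(of_nat ((3*(Suc m+k)+2) choose (3*Suc m)) :: 'a :: field_char_0)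
     = pochhammer (of_nat k + 7/3) m * pochhammer (of_nat k + 5/3) (Suc m)
       / (pochhammer (4/3) m * pochhammer (5/3) m)
       * of_nat ((Suc m+k) choose Suc m) * (of_nat ((3*k+4) choose 2) / (of_nat k + 1))"
proof -
  have "(of_nat ((3*(Suc m+k)+2) choose (3*Suc m)) :: 'a)
      * (pochhammer (1/3) (Suc m) * pochhammer (2/3) (Suc m) * pochhammer 1 (Suc m))
      = pochhammer (of_nat k + 1) (Suc m) * pochhammer (of_nat k + 4/3) (Suc m)
          * pochhammer (of_nat k + 5/3) (Suc m)"
    using binomial_pochhammer_thirds[of "Suc m" k 2 0, where 'a='a] by (simp add: add_ac)
  moreover have "pochhammer (1/3 :: 'a) (Suc m) = 1/3 * pochhammer (4/3) m"
    "pochhammer (2/3 :: 'a) (Suc m) = 2/3 * pochhammer (5/3) m"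
    "pochhammer (of_nat k + 4/3 :: 'a) (Suc m) = (of_nat k + 4/3) * pochhammer (of_nat k + 7/3) m"
    by (simp_all only: pochhammer_rec) (simp_all add: add.assoc)
  ultimately have "(of_nat ((3*(Suc m+k)+2) choose (3*Suc m)) :: 'a)
      * (2/9 * pochhammer (4/3) m * pochhammer (5/3) m * fact (Suc m))
      = (of_nat k + 4/3) * pochhammer (of_nat k + 7/3) m * pochhammer (of_nat k + 5/3) (Suc m)
        * (fact (Suc m) * of_nat ((Suc m+k) choose Suc m))"
    unfolding pochhammer_of_nat_plus_one pochhammer_fact[symmetric] by (simp add: ac_simps)
  then have "(of_nat ((3*(Suc m+k)+2) choose (3*Suc m)) :: 'a)
      = (of_nat k + 4/3) * pochhammer (of_nat k + 7/3) m * pochhammer (of_nat k + 5/3) (Suc m)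
        * (fact (Suc m) * of_nat ((Suc m+k) choose Suc m))
        / (2/9 * pochhammer (4/3) m * pochhammer (5/3) m * fact (Suc m))"
    by (rule eq_divide_imp[rotated]) (simp add: pochhammer_4_3_neq_0 pochhammer_5_3_neq_0
        del: fact_Suc)
  also have "\<dots> = pochhammer (of_nat k + 7/3) m * pochhammer (of_nat k + 5/3) (Suc m)
       / (pochhammer (4/3) m * pochhammer (5/3) m)
       * of_nat ((Suc m+k) choose Suc m) * (of_nat ((3*k+4) choose 2) / (of_nat k + 1))"
    unfolding of_nat_choose_2_div_plus_one
    by (simp add: field_simps pochhammer_4_3_neq_0 pochhammer_5_3_neq_0 del: fact_Suc
        binomial_Suc_Suc)
  finally show ?thesis .
qed

lemma binomial_pochhammer_thirds_3_2:
  "(of_nat ((3*(n+k)+3) choose (3*n+2)) :: 'a :: field_char_0)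
     = pochhammer (of_nat k + 5/3) n * pochhammer (of_nat k + 4/3) n
       / (pochhammer (4/3) n * pochhammer (5/3) n)
       * of_nat ((n+k+1) choose n) * of_nat ((3*k+3) choose 2)"
proof -
  have "(of_nat ((3*(n+k)+3) choose (3*n+2)) :: 'a)
      * (fact n * pochhammer (4/3) n * pochhammer (5/3) n)
      = pochhammer (of_nat k + 4/3) n * pochhammer (of_nat k + 5/3) n
        * (fact n * of_nat ((n+k+1) choose n)) * of_nat ((3*k+3) choose 2)"
    using binomial_pochhammer_thirds[of n k 3 2, where 'a='a]
      pochhammer_of_nat_plus_one[of "k+1" n, where 'a='a]
    by (simp add: pochhammer_fact ac_simps)
  then show ?thesis
    by (simp add: field_simps pochhammer_4_3_neq_0 pochhammer_5_3_neq_0)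
qed

lemma binomial_pochhammer_thirds_2_1_Suc:
  "(of_nat ((3*(Suc m+k)+2) choose (3*Suc m+1)) :: 'a :: field_char_0)
     = pochhammer (of_nat k + 5/3) (Suc m) * pochhammer (of_nat k + 4/3) (Suc m)
       / (pochhammer (4/3) (Suc m) * pochhammer (5/3) m)
       * of_nat ((Suc m+k) choose Suc m) * (of_nat ((3*k+3) choose 2) / (of_nat k + 1))"
proof -
  have "(of_nat ((3*(Suc m+k)+2) choose (3*Suc m+1)) :: 'a)
      * (pochhammer (2/3) (Suc m) * pochhammer 1 (Suc m) * pochhammer (4/3) (Suc m))
      = pochhammer (of_nat k + 1) (Suc m) * pochhammer (of_nat k + 4/3) (Suc m)
          * pochhammer (of_nat k + 5/3) (Suc m) * of_nat ((3*k+2) choose 1)"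
    using binomial_pochhammer_thirds[of "Suc m" k 2 1, where 'a='a] by (simp add: add_ac)
  moreover have "pochhammer (2/3 :: 'a) (Suc m) = 2/3 * pochhammer (5/3) m"
    by (simp only: pochhammer_rec) simp
  ultimately have "(of_nat ((3*(Suc m+k)+2) choose (3*Suc m+1)) :: 'a)
      * (2/3 * pochhammer (5/3) m * fact (Suc m) * pochhammer (4/3) (Suc m))
      = (fact (Suc m) * of_nat ((Suc m+k) choose Suc m)) * pochhammer (of_nat k + 4/3) (Suc m)
          * pochhammer (of_nat k + 5/3) (Suc m) * of_nat (3*k+2)"
    unfolding pochhammer_of_nat_plus_one pochhammer_fact[symmetric] by (simp add: ac_simps)
  then have "(of_nat ((3*(Suc m+k)+2) choose (3*Suc m+1)) :: 'a)
      = (fact (Suc m) * of_nat ((Suc m+k) choose Suc m)) * pochhammer (of_nat k + 4/3) (Suc m)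
          * pochhammer (of_nat k + 5/3) (Suc m) * of_nat (3*k+2)
        / (2/3 * pochhammer (5/3) m * fact (Suc m) * pochhammer (4/3) (Suc m))"
    by (rule eq_divide_imp[rotated]) (simp add: pochhammer_4_3_neq_0 pochhammer_5_3_neq_0
        del: fact_Suc)
  also have "\<dots> = pochhammer (of_nat k + 5/3) (Suc m) * pochhammer (of_nat k + 4/3) (Suc m)
       / (pochhammer (4/3) (Suc m) * pochhammer (5/3) m)
       * of_nat ((Suc m+k) choose Suc m) * (of_nat ((3*k+3) choose 2) / (of_nat k + 1))"
    unfolding of_nat_choose_2_div_plus_one
    by (simp add: field_simps pochhammer_4_3_neq_0 pochhammer_5_3_neq_0 del: fact_Suc
        binomial_Suc_Suc)
  finally show ?thesis .
qed

lemma binomial_pochhammer_thirds_1_0_Suc: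
  "(of_nat ((3*(Suc m+k)+1) choose (3*Suc m)) :: 'a :: field_char_0)
     = pochhammer (of_nat k + 5/3) m * pochhammer (of_nat k + 4/3) (Suc m)
       / (pochhammer (4/3) m * pochhammer (5/3) m)
       * of_nat ((Suc m+k) choose Suc m) * (of_nat ((3*k+3) choose 2) / (of_nat k + 1))"
proof -
  have "(of_nat ((3*(Suc m+k)+1) choose (3*Suc m)) :: 'a)
      * (pochhammer (1/3) (Suc m) * pochhammer (2/3) (Suc m) * pochhammer 1 (Suc m))
      = pochhammer (of_nat k + 2/3) (Suc m) * pochhammer (of_nat k + 1) (Suc m)
          * pochhammer (of_nat k + 4/3) (Suc m)"
    using binomial_pochhammer_thirds[of "Suc m" k 1 0, where 'a='a] by (simp add: add_ac)
  moreover have "pochhammer (1/3 :: 'a) (Suc m) = 1/3 * pochhammer (4/3) m"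
    "pochhammer (2/3 :: 'a) (Suc m) = 2/3 * pochhammer (5/3) m"
    "pochhammer (of_nat k + 2/3 :: 'a) (Suc m) = (of_nat k + 2/3) * pochhammer (of_nat k + 5/3) m"
    by (simp_all only: pochhammer_rec) (simp_all add: add.assoc)
  ultimately have "(of_nat ((3*(Suc m+k)+1) choose (3*Suc m)) :: 'a)
      * (2/9 * pochhammer (4/3) m * pochhammer (5/3) m * fact (Suc m))
      = (of_nat k + 2/3) * pochhammer (of_nat k + 5/3) m * pochhammer (of_nat k + 4/3) (Suc m)
        * (fact (Suc m) * of_nat ((Suc m+k) choose Suc m))"
    unfolding pochhammer_of_nat_plus_one pochhammer_fact[symmetric] by (simp add: ac_simps)
  then have "(of_nat ((3*(Suc m+k)+1) choose (3*Suc m)) :: 'a)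
      = (of_nat k + 2/3) * pochhammer (of_nat k + 5/3) m * pochhammer (of_nat k + 4/3) (Suc m)
        * (fact (Suc m) * of_nat ((Suc m+k) choose Suc m))
        / (2/9 * pochhammer (4/3) m * pochhammer (5/3) m * fact (Suc m))"
    by (rule eq_divide_imp[rotated]) (simp add: pochhammer_4_3_neq_0 pochhammer_5_3_neq_0
        del: fact_Suc)
  also have "\<dots> = pochhammer (of_nat k + 5/3) m * pochhammer (of_nat k + 4/3) (Suc m)
       / (pochhammer (4/3) m * pochhammer (5/3) m)
       * of_nat ((Suc m+k) choose Suc m) * (of_nat ((3*k+3) choose 2) / (of_nat k + 1))"
    unfolding of_nat_choose_2_div_plus_one
    by (simp add: field_simps pochhammer_4_3_neq_0 pochhammer_5_3_neq_0 del: fact_Suc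
        binomial_Suc_Suc)
  finally show ?thesis .
qed

lemma binomial_pochhammer_thirds_initial:
  fixes k :: nat
  shows "(of_nat ((3*k+3) choose 1) :: 'a :: field_char_0)
      = 2 * of_nat ((3*k+4) choose 2) / (3 * (of_nat k + 4/3))"
    and "(of_nat ((3*k+2) choose 0) :: 'a)
      = 2 * of_nat ((3*k+4) choose 2) / (9 * (of_nat k + 1) * (of_nat k + 4/3))"
    and "(of_nat ((3*k+2) choose 1) :: 'a)
      = 2 * of_nat ((3*k+3) choose 2) / (3 * (of_nat k + 1))"
    and "(of_nat ((3*k+1) choose 0) :: 'a)
      = 2 * of_nat ((3*k+3) choose 2) / (9 * (of_nat k + 1) * (of_nat k + 2/3))"
proof -
  have "of_nat k + 1 \<noteq> (0 :: 'a)" "of_nat k + 4/3 \<noteq> (0 :: 'a)" "of_nat k + 2/3 \<noteq> (0 :: 'a)"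
    using of_nat_plus_one_neq_0[of k]
      of_nat_add_fraction_neq_0[of k 3 2] of_nat_add_fraction_neq_0[of k 1 2]
    by simp_all
  then have nz: "3 * (of_nat k + 4/3) \<noteq> (0 :: 'a)"
    "9 * (of_nat k + 1) * (of_nat k + 4/3) \<noteq> (0 :: 'a)"
    "3 * (of_nat k + 1) \<noteq> (0 :: 'a)"
    "9 * (of_nat k + 1) * (of_nat k + 2/3) \<noteq> (0 :: 'a)"
    by (simp_all only: mult_eq_0_iff zero_neq_numeral) simp_all
  show "(of_nat ((3*k+3) choose 1) :: 'a)
      = 2 * of_nat ((3*k+4) choose 2) / (3 * (of_nat k + 4/3))"
    by (rule eq_divide_imp[OF nz(1)]) (simp add: of_nat_choose_2 algebra_simps)
  show "(of_nat ((3*k+2) choose 0) :: 'a)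
      = 2 * of_nat ((3*k+4) choose 2) / (9 * (of_nat k + 1) * (of_nat k + 4/3))"
    by (rule eq_divide_imp[OF nz(2)]) (simp add: of_nat_choose_2 algebra_simps)
  show "(of_nat ((3*k+2) choose 1) :: 'a)
      = 2 * of_nat ((3*k+3) choose 2) / (3 * (of_nat k + 1))"
    by (rule eq_divide_imp[OF nz(3)]) (simp add: of_nat_choose_2 algebra_simps)
  show "(of_nat ((3*k+1) choose 0) :: 'a)
      = 2 * of_nat ((3*k+3) choose 2) / (9 * (of_nat k + 1) * (of_nat k + 2/3))"
    by (rule eq_divide_imp[OF nz(4)]) (simp add: of_nat_choose_2 algebra_simps)
qed

section \<open>Coefficients of a cubic decomposition\<close>

lemma coeff_cube_sub:
  "coeff (cube_sub p) k = (if 3 dvd k then coeff p (k div 3) else 0)"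
  unfolding cube_sub_def
proof (induction p arbitrary: k)
  case 0
  then show ?case by simp
next
  case (pCons a p)
  show ?case
  proof (cases "k < 3")
    case True
    then have "k = 0 \<or> k = 1 \<or> k = 2" by auto
    then show ?thesis by (auto simp: pcompose_pCons coeff_monom_mult coeff_pCons')
  next
    case False
    then obtain i where k: "k = i + 3" by (metis add.commute le_Suc_ex not_less)
    have "coeff (pCons a p \<circ>\<^sub>p monom 1 3) (i + 3) = coeff (p \<circ>\<^sub>p monom 1 3) i"
      by (simp add: pcompose_pCons coeff_pCons' coeff_monom_mult)
    then show ?thesis using pCons.IH[of i] by (simp add: k dvd_add_left_iff)
  qed
qed

lemma coeff_shift_cube_sub:
  "coeff (pCons 0 (cube_sub p)) k = (if k mod 3 = 1 then coeff p (k div 3) else 0)"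
proof (cases k)
  case (Suc i)
  have "3 dvd i \<longleftrightarrow> Suc i mod 3 = 1" "3 dvd i \<Longrightarrow> i div 3 = Suc i div 3"
    by presburger+
  then show ?thesis by (simp add: Suc coeff_cube_sub)
qed simp

lemma coeff_shift2_cube_sub:
  "coeff (pCons 0 (pCons 0 (cube_sub p))) k = (if k mod 3 = 2 then coeff p (k div 3) else 0)"
proof (cases k)
  case (Suc i)
  have "i mod 3 = 1 \<longleftrightarrow> Suc i mod 3 = 2" "i mod 3 = 1 \<Longrightarrow> i div 3 = Suc i div 3"
    by presburger+
  then show ?thesis by (simp add: Suc coeff_shift_cube_sub)
qed simp

lemma coeff_cubic_combination:
  fixes A B C :: "complex poly"
  defines "V \<equiv> cube_sub A + [:0,1:] * cube_sub B + [:0,0,1:] * cube_sub C"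
  shows "coeff V (3*j) = coeff A j" "coeff V (3*j+1) = coeff B j" "coeff V (3*j+2) = coeff C j"
proof -
  have "(3*j+1) mod 3 = 1" "(3*j+2) mod 3 = 2" "\<not> 3 dvd (3*j+1)" "\<not> 3 dvd (3*j+2)"
    by presburger+
  then show "coeff V (3*j) = coeff A j" "coeff V (3*j+1) = coeff B j" "coeff V (3*j+2) = coeff C j"
    unfolding V_def by (simp_all add: coeff_shift_cube_sub coeff_shift2_cube_sub coeff_cube_sub)
qed

section \<open>The components of an Appell sequence\<close>

lemma appell_coeff:
  assumes "Appell W"
  shows "coeff (W n) j = of_nat (n choose j) * coeff (W (n-j)) 0"
proof (induction n arbitrary: j)
  case 0
  have "degree (W 0) = 0" using assms by (simp add: Appell_def MPS_def)
  then show ?case by (cases j) (auto simp: coeff_eq_0)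
next
  case (Suc n)
  show ?case
  proof (cases j)
    case 0 then show ?thesis by simp
  next
    case (Suc i)
    have deriv: "pderiv (W (Suc n)) = smult (of_nat (Suc n)) (W n)"
      using assms by (simp add: Appell_def)
    have "of_nat (Suc i) * coeff (W (Suc n)) (Suc i) = coeff (pderiv (W (Suc n))) i"
      by (simp add: coeff_pderiv)
    also have "\<dots> = of_nat (Suc n) * (of_nat (n choose i) * coeff (W (n-i)) 0)"
      using deriv Suc.IH by simp
    also have "\<dots> = of_nat (Suc i) * (of_nat (Suc n choose Suc i) * coeff (W (n-i)) 0)"
    proof -
      have absorb: "of_nat (Suc n) * of_nat (n choose i)
          = (of_nat (Suc n choose Suc i) * of_nat (Suc i) :: complex)"
        by (metis of_nat_mult Suc_times_binomial_eq)
      show ?thesis by (simp only: mult.assoc[symmetric] absorb) (simp only: ac_simps)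
    qed
    finally have "coeff (W (Suc n)) (Suc i) = of_nat (Suc n choose Suc i) * coeff (W (n-i)) 0"
      by (metis mult_cancel_left of_nat_eq_0_iff nat.distinct(1))
    then show ?thesis using Suc by simp
  qed
qed

text \<open>For j > m the index m - j truncates to 0; this is harmless because the binomial
  coefficient vanishes there whenever s \<le> t + 2.\<close>

definition has_binomial_coeffs ::
    "(nat \<Rightarrow> complex poly) \<Rightarrow> nat \<Rightarrow> nat \<Rightarrow> (nat \<Rightarrow> complex) \<Rightarrow> bool" where
  "has_binomial_coeffs X s t v \<longleftrightarrow>
    (\<forall>m j. coeff (X m) j = of_nat ((3*m+s) choose (3*j+t)) * v (m-j))"

lemma appell_has_binomial_coeffs:
  assumes "Appell W" and X: "\<And>m j. coeff (X m) j = coeff (W (3*m+s)) (3*j+t)"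
    and "s = t + r" "r \<le> 2"
  shows "has_binomial_coeffs X s t (\<lambda>i. coeff (W (3*i+r)) 0)"
  unfolding has_binomial_coeffs_def
proof (intro allI)
  fix m j
  have "coeff (X m) j = of_nat ((3*m+s) choose (3*j+t)) * coeff (W (3*m+s-(3*j+t))) 0"
    unfolding X by (rule appell_coeff[OF \<open>Appell W\<close>])
  also have "\<dots> = of_nat ((3*m+s) choose (3*j+t)) * coeff (W (3*(m-j)+r)) 0"
  proof (cases "j \<le> m")
    case True
    then have "3*m+s-(3*j+t) = 3*(m-j)+r" using assms(3) by (simp add: diff_mult_distrib2)
    then show ?thesis by simp
  next
    case False
    then have "3*m+s < 3*j+t" using assms(3,4) by simp
    then show ?thesis by simp
  qed
  finally show "coeff (X m) j = of_nat ((3*m+s) choose (3*j+t)) * coeff (W (3*(m-j)+r)) 0" .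
qed

lemma has_binomial_coeffs_eq_0_iff:
  assumes "has_binomial_coeffs X s t v" "t \<le> s"
  shows "(\<forall>m. X m = 0) \<longleftrightarrow> (\<forall>i. v i = 0)"
proof
  assume "\<forall>m. X m = 0"
  show "\<forall>i. v i = 0"
  proof
    fix i
    have "coeff (X i) 0 = of_nat ((3*i+s) choose t) * v i"
      using assms(1) unfolding has_binomial_coeffs_def by (metis add_0 diff_zero mult_0_right)
    then show "v i = 0" using \<open>\<forall>m. X m = 0\<close> \<open>t \<le> s\<close> by simp
  qed
next
  assume "\<forall>i. v i = 0"
  then show "\<forall>m. X m = 0"
    using assms(1) unfolding has_binomial_coeffs_def by (auto intro: poly_eqI)
qed

lemma has_binomial_coeffs_normalize:
  assumes X: "has_binomial_coeffs X s t v" and "t \<le> s" "s \<le> t + 2"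
    and vk: "v k \<noteq> 0" and below: "\<forall>i<k. v i = 0"
  obtains h where "MPS h"
    "\<And>n. X (n+k) = smult (of_nat ((3*(n+k)+s) choose (3*n+t)) * v k) (h n)"
proof -
  define c where "c n = of_nat ((3*(n+k)+s) choose (3*n+t)) * v k" for n
  have c_nz: "c n \<noteq> 0" for n
    unfolding c_def using vk \<open>t \<le> s\<close> by simp
  have cf: "coeff (X m) j = of_nat ((3*m+s) choose (3*j+t)) * v (m-j)" for m j
    using X unfolding has_binomial_coeffs_def by blast
  have deg: "degree (X (n+k)) = n" and lc: "lead_coeff (X (n+k)) = c n" for n
  proof -
    have "coeff (X (n+k)) j = 0" if "j > n" for j
    proof (cases "j \<le> n+k")
      case True
      then show ?thesis using cf[of "n+k" j] below that by simp
    next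
      case False
      then have "3*(n+k)+s < 3*j+t" using \<open>s \<le> t + 2\<close> by arith
      then show ?thesis using cf[of "n+k" j] by simp
    qed
    then have "degree (X (n+k)) \<le> n" by (simp add: degree_le)
    moreover have "coeff (X (n+k)) n = c n" using cf[of "n+k" n] by (simp add: c_def)
    ultimately show "degree (X (n+k)) = n"
      using c_nz by (metis le_antisym le_degree)
    then show "lead_coeff (X (n+k)) = c n" using \<open>coeff (X (n+k)) n = c n\<close> by simp
  qed
  show ?thesis
  proof
    show "MPS (\<lambda>n. smult (inverse (c n)) (X (n+k)))"
      unfolding MPS_def using deg lc c_nz by (simp add: lead_coeff_smult)
    show "X (n+k) = smult (of_nat ((3*(n+k)+s) choose (3*n+t)) * v k)
        (smult (inverse (c n)) (X (n+k)))" for n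
      unfolding c_def[symmetric] using c_nz[of n] by simp
  qed
qed

lemma a1_c1_b2_normal_form:
  assumes a1: "has_binomial_coeffs a1 3 1 v" and c1: "has_binomial_coeffs c1 2 0 v"
    and b2: "has_binomial_coeffs b2 4 2 v"
  shows "((\<forall>n. a1 n = 0) \<and> (\<forall>n. c1 n = 0) \<and> (\<forall>n. b2 n = 0))
    \<or> ((\<exists>n. a1 n \<noteq> 0) \<and> (\<exists>n. c1 n \<noteq> 0) \<and> (\<exists>n. b2 n \<noteq> 0) \<and>
       (\<exists>(\<kappa>::nat) (\<mu>1::nat \<Rightarrow> complex) (\<mu>2::nat \<Rightarrow> complex) (\<mu>3::nat \<Rightarrow> complex)
          (hb2::nat \<Rightarrow> complex poly) (ha1::nat \<Rightarrow> complex poly) (hc1::nat \<Rightarrow> complex poly).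
          MPS hb2 \<and> MPS ha1 \<and> MPS hc1 \<and>
          (\<forall>n. b2 (n+\<kappa>) = smult (\<mu>1 n) (hb2 n)) \<and>
          (\<forall>n. a1 (n+\<kappa>) = smult (\<mu>2 n) (ha1 n)) \<and>
          (\<forall>n. c1 (n+\<kappa>) = smult (\<mu>3 n) (hc1 n)) \<and>
          (\<exists>\<beta>::complex. \<beta> \<noteq> 0 \<and>
            (\<forall>n. \<mu>1 n = pochhammer (of_nat \<kappa> + 7/3) n * pochhammer (of_nat \<kappa> + 5/3) n
                   / (pochhammer (4/3) n * pochhammer (5/3) n)
                   * of_nat ((n+\<kappa>+1) choose n) * \<beta>) \<and>
            (\<forall>n\<ge>1. \<mu>2 n = pochhammer (of_nat \<kappa> + 7/3) (n-1) * pochhammer (of_nat \<kappa> + 5/3) n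
                   / (pochhammer (4/3) n * pochhammer (5/3) (n-1))
                   * of_nat ((n+\<kappa>+1) choose n) * \<beta>) \<and>
            (\<forall>n\<ge>1. \<mu>3 n = pochhammer (of_nat \<kappa> + 7/3) (n-1) * pochhammer (of_nat \<kappa> + 5/3) n
                   / (pochhammer (4/3) (n-1) * pochhammer (5/3) (n-1))
                   * of_nat ((n+\<kappa>) choose n) * (\<beta> / (of_nat \<kappa> + 1))) \<and>
            \<mu>2 0 = 2 * \<beta> / (3 * (of_nat \<kappa> + 4/3)) \<and>
            \<mu>3 0 = 2 * \<beta> / (9 * (of_nat \<kappa> + 1) * (of_nat \<kappa> + 4/3)))))"
proof (cases "\<forall>i. v i = 0")
  case True
  then show ?thesis
    using has_binomial_coeffs_eq_0_iff[OF a1] has_binomial_coeffs_eq_0_iff[OF c1] has_binomial_coeffs_eq_0_iff[OF b2] by simp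
next
  case False
  then have nonnull: "\<exists>n. a1 n \<noteq> 0" "\<exists>n. c1 n \<noteq> 0" "\<exists>n. b2 n \<noteq> 0"
    using has_binomial_coeffs_eq_0_iff[OF a1] has_binomial_coeffs_eq_0_iff[OF c1] has_binomial_coeffs_eq_0_iff[OF b2] by auto
  obtain k where vk: "v k \<noteq> 0" and below: "\<forall>i<k. v i = 0"
    using False exists_least_iff[of "\<lambda>i. v i \<noteq> 0"] by auto
  define \<mu>1 where "\<mu>1 n = of_nat ((3*(n+k)+4) choose (3*n+2)) * v k" for n
  define \<mu>2 where "\<mu>2 n = of_nat ((3*(n+k)+3) choose (3*n+1)) * v k" for n
  define \<mu>3 where "\<mu>3 n = of_nat ((3*(n+k)+2) choose (3*n+0)) * v k" for n
  define \<beta> where "\<beta> = of_nat ((3*k+4) choose 2) * v k"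
  obtain hb2 where hb2: "MPS hb2" "\<And>n. b2 (n+k) = smult (\<mu>1 n) (hb2 n)"
    using has_binomial_coeffs_normalize[OF b2 _ _ vk below] unfolding \<mu>1_def by auto
  obtain ha1 where ha1: "MPS ha1" "\<And>n. a1 (n+k) = smult (\<mu>2 n) (ha1 n)"
    using has_binomial_coeffs_normalize[OF a1 _ _ vk below] unfolding \<mu>2_def by auto
  obtain hc1 where hc1: "MPS hc1" "\<And>n. c1 (n+k) = smult (\<mu>3 n) (hc1 n)"
    using has_binomial_coeffs_normalize[OF c1 _ _ vk below] unfolding \<mu>3_def by auto
  have "\<beta> \<noteq> 0" using vk by (simp add: \<beta>_def)
  moreover have "\<mu>1 n = pochhammer (of_nat k + 7/3) n * pochhammer (of_nat k + 5/3) n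
      / (pochhammer (4/3) n * pochhammer (5/3) n) * of_nat ((n+k+1) choose n) * \<beta>" for n
    unfolding \<mu>1_def \<beta>_def binomial_pochhammer_thirds_4_2 by (simp only: mult.assoc)
  moreover have "\<mu>2 n = pochhammer (of_nat k + 7/3) (n-1) * pochhammer (of_nat k + 5/3) n
      / (pochhammer (4/3) n * pochhammer (5/3) (n-1)) * of_nat ((n+k+1) choose n) * \<beta>"
    if "n \<ge> 1" for n
  proof -
    obtain m where n: "n = Suc m" using \<open>n \<ge> 1\<close> by (cases n) auto
    show ?thesis
      unfolding n \<mu>2_def \<beta>_def binomial_pochhammer_thirds_3_1_Suc
      by (simp only: diff_Suc_1 ac_simps times_divide_eq_right)
  qed
  moreover have "\<mu>3 n = pochhammer (of_nat k + 7/3) (n-1) * pochhammer (of_nat k + 5/3) n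
      / (pochhammer (4/3) (n-1) * pochhammer (5/3) (n-1)) * of_nat ((n+k) choose n)
      * (\<beta> / (of_nat k + 1))"
    if "n \<ge> 1" for n
  proof -
    obtain m where n: "n = Suc m" using \<open>n \<ge> 1\<close> by (cases n) auto
    show ?thesis
      unfolding n \<mu>3_def \<beta>_def add_0_right binomial_pochhammer_thirds_2_0_Suc
      by (simp only: diff_Suc_1 ac_simps times_divide_eq_right)
  qed
  moreover have "\<mu>2 0 = of_nat ((3*k+3) choose 1) * v k" "\<mu>3 0 = of_nat ((3*k+2) choose 0) * v k"
    unfolding \<mu>2_def \<mu>3_def by (simp_all only: add_0_left add_0_right mult_0_right)
  then have "\<mu>2 0 = 2 * \<beta> / (3 * (of_nat k + 4/3))" "\<mu>3 0 = 2 * \<beta> / (9 * (of_nat k + 1) * (of_nat k + 4/3))"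
    unfolding \<beta>_def binomial_pochhammer_thirds_initial
    by (simp_all only: times_divide_eq_left times_divide_eq_right ac_simps)
  ultimately show ?thesis
    using nonnull hb2 ha1 hc1 by blast
qed

lemma a2_c2_b1_normal_form:
  assumes a2: "has_binomial_coeffs a2 3 2 v" and c2: "has_binomial_coeffs c2 2 1 v"
    and b1: "has_binomial_coeffs b1 1 0 v"
  shows "((\<forall>n. a2 n = 0) \<and> (\<forall>n. c2 n = 0) \<and> (\<forall>n. b1 n = 0))
    \<or> ((\<exists>n. a2 n \<noteq> 0) \<and> (\<exists>n. c2 n \<noteq> 0) \<and> (\<exists>n. b1 n \<noteq> 0) \<and>
       (\<exists>(\<tau>::nat) (\<alpha>1::nat \<Rightarrow> complex) (\<alpha>2::nat \<Rightarrow> complex) (\<alpha>3::nat \<Rightarrow> complex)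
          (ha2::nat \<Rightarrow> complex poly) (hc2::nat \<Rightarrow> complex poly) (hb1::nat \<Rightarrow> complex poly).
          MPS ha2 \<and> MPS hc2 \<and> MPS hb1 \<and>
          (\<forall>n. a2 (n+\<tau>) = smult (\<alpha>1 n) (ha2 n)) \<and>
          (\<forall>n. c2 (n+\<tau>) = smult (\<alpha>2 n) (hc2 n)) \<and>
          (\<forall>n. b1 (n+\<tau>) = smult (\<alpha>3 n) (hb1 n)) \<and>
          (\<exists>\<gamma>::complex. \<gamma> \<noteq> 0 \<and>
            (\<forall>n. \<alpha>1 n = pochhammer (of_nat \<tau> + 5/3) n * pochhammer (of_nat \<tau> + 4/3) n
                   / (pochhammer (4/3) n * pochhammer (5/3) n)
                   * of_nat ((n+\<tau>+1) choose n) * \<gamma>) \<and>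
            (\<forall>n\<ge>1. \<alpha>2 n = pochhammer (of_nat \<tau> + 5/3) n * pochhammer (of_nat \<tau> + 4/3) n
                   / (pochhammer (4/3) n * pochhammer (5/3) (n-1))
                   * of_nat ((n+\<tau>) choose n) * (\<gamma> / (of_nat \<tau> + 1))) \<and>
            (\<forall>n\<ge>1. \<alpha>3 n = pochhammer (of_nat \<tau> + 5/3) (n-1) * pochhammer (of_nat \<tau> + 4/3) n
                   / (pochhammer (4/3) (n-1) * pochhammer (5/3) (n-1))
                   * of_nat ((n+\<tau>) choose n) * (\<gamma> / (of_nat \<tau> + 1))) \<and>
            \<alpha>2 0 = 2 * \<gamma> / (3 * (of_nat \<tau> + 1)) \<and>
            \<alpha>3 0 = 2 * \<gamma> / (9 * (of_nat \<tau> + 1) * (of_nat \<tau> + 2/3)))))"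
proof (cases "\<forall>i. v i = 0")
  case True
  then show ?thesis
    using has_binomial_coeffs_eq_0_iff[OF a2] has_binomial_coeffs_eq_0_iff[OF c2] has_binomial_coeffs_eq_0_iff[OF b1] by simp
next
  case False
  then have nonnull: "\<exists>n. a2 n \<noteq> 0" "\<exists>n. c2 n \<noteq> 0" "\<exists>n. b1 n \<noteq> 0"
    using has_binomial_coeffs_eq_0_iff[OF a2] has_binomial_coeffs_eq_0_iff[OF c2] has_binomial_coeffs_eq_0_iff[OF b1] by auto
  obtain k where vk: "v k \<noteq> 0" and below: "\<forall>i<k. v i = 0"
    using False exists_least_iff[of "\<lambda>i. v i \<noteq> 0"] by auto
  define \<alpha>1 where "\<alpha>1 n = of_nat ((3*(n+k)+3) choose (3*n+2)) * v k" for n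
  define \<alpha>2 where "\<alpha>2 n = of_nat ((3*(n+k)+2) choose (3*n+1)) * v k" for n
  define \<alpha>3 where "\<alpha>3 n = of_nat ((3*(n+k)+1) choose (3*n+0)) * v k" for n
  define \<gamma> where "\<gamma> = of_nat ((3*k+3) choose 2) * v k"
  obtain ha2 where ha2: "MPS ha2" "\<And>n. a2 (n+k) = smult (\<alpha>1 n) (ha2 n)"
    using has_binomial_coeffs_normalize[OF a2 _ _ vk below] unfolding \<alpha>1_def by auto
  obtain hc2 where hc2: "MPS hc2" "\<And>n. c2 (n+k) = smult (\<alpha>2 n) (hc2 n)"
    using has_binomial_coeffs_normalize[OF c2 _ _ vk below] unfolding \<alpha>2_def by auto
  obtain hb1 where hb1: "MPS hb1" "\<And>n. b1 (n+k) = smult (\<alpha>3 n) (hb1 n)"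
    using has_binomial_coeffs_normalize[OF b1 _ _ vk below] unfolding \<alpha>3_def by auto
  have "\<gamma> \<noteq> 0" using vk by (simp add: \<gamma>_def)
  moreover have "\<alpha>1 n = pochhammer (of_nat k + 5/3) n * pochhammer (of_nat k + 4/3) n
      / (pochhammer (4/3) n * pochhammer (5/3) n) * of_nat ((n+k+1) choose n) * \<gamma>" for n
    unfolding \<alpha>1_def \<gamma>_def binomial_pochhammer_thirds_3_2 by (simp only: mult.assoc)
  moreover have "\<alpha>2 n = pochhammer (of_nat k + 5/3) n * pochhammer (of_nat k + 4/3) n
      / (pochhammer (4/3) n * pochhammer (5/3) (n-1)) * of_nat ((n+k) choose n)
      * (\<gamma> / (of_nat k + 1))"
    if "n \<ge> 1" for n
  proof -
    obtain m where n: "n = Suc m" using \<open>n \<ge> 1\<close> by (cases n) auto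
    show ?thesis
      unfolding n \<alpha>2_def \<gamma>_def binomial_pochhammer_thirds_2_1_Suc
      by (simp only: diff_Suc_1 ac_simps times_divide_eq_right)
  qed
  moreover have "\<alpha>3 n = pochhammer (of_nat k + 5/3) (n-1) * pochhammer (of_nat k + 4/3) n
      / (pochhammer (4/3) (n-1) * pochhammer (5/3) (n-1)) * of_nat ((n+k) choose n)
      * (\<gamma> / (of_nat k + 1))"
    if "n \<ge> 1" for n
  proof -
    obtain m where n: "n = Suc m" using \<open>n \<ge> 1\<close> by (cases n) auto
    show ?thesis
      unfolding n \<alpha>3_def \<gamma>_def add_0_right binomial_pochhammer_thirds_1_0_Suc
      by (simp only: diff_Suc_1 ac_simps times_divide_eq_right)
  qed
  moreover have "\<alpha>2 0 = of_nat ((3*k+2) choose 1) * v k" "\<alpha>3 0 = of_nat ((3*k+1) choose 0) * v k"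
    unfolding \<alpha>2_def \<alpha>3_def by (simp_all only: add_0_left add_0_right mult_0_right)
  then have "\<alpha>2 0 = 2 * \<gamma> / (3 * (of_nat k + 1))" "\<alpha>3 0 = 2 * \<gamma> / (9 * (of_nat k + 1) * (of_nat k + 2/3))"
    unfolding \<gamma>_def binomial_pochhammer_thirds_initial
    by (simp_all only: times_divide_eq_left times_divide_eq_right ac_simps)
  ultimately show ?thesis
    using nonnull ha2 hc2 hb1 by blast
qed

theorem theorem2:
  fixes W P Q R a1 a2 b1 b2 c1 c2 :: "nat \<Rightarrow> complex poly"
  assumes appell: "Appell W"
    and mps: "MPS P" "MPS Q" "MPS R"
    and deg_a1: "\<And>n. degree (a1 n) \<le> n"
    and deg_a2: "\<And>n. degree (a2 n) \<le> n"
    and deg_b2: "\<And>n. degree (b2 n) \<le> n"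
    and deg_b1: "\<And>n. degree (b1 n) \<le> n"
    and deg_c1: "\<And>n. degree (c1 n) \<le> n"
    and deg_c2: "\<And>n. degree (c2 n) \<le> n"
    and dec0: "\<And>n. W (3*n) = cube_sub (P n)
                 + [:0,1:] * cube_sub (if n = 0 then 0 else a1 (n-1))
                 + [:0,0,1:] * cube_sub (if n = 0 then 0 else a2 (n-1))"
    and dec1: "\<And>n. W (3*n+1) = cube_sub (b1 n)
                 + [:0,1:] * cube_sub (Q n)
                 + [:0,0,1:] * cube_sub (if n = 0 then 0 else b2 (n-1))"
    and dec2: "\<And>n. W (3*n+2) = cube_sub (c1 n)
                 + [:0,1:] * cube_sub (c2 n)
                 + [:0,0,1:] * cube_sub (R n)"
  shows
   "((((\<forall>n. a1 n = 0) \<and> (\<forall>n. c1 n = 0) \<and> (\<forall>n. b2 n = 0))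
    \<or> ((\<exists>n. a1 n \<noteq> 0) \<and> (\<exists>n. c1 n \<noteq> 0) \<and> (\<exists>n. b2 n \<noteq> 0) \<and>
       (\<exists>(\<kappa>::nat) (\<mu>1::nat \<Rightarrow> complex) (\<mu>2::nat \<Rightarrow> complex) (\<mu>3::nat \<Rightarrow> complex)
          (hb2::nat \<Rightarrow> complex poly) (ha1::nat \<Rightarrow> complex poly) (hc1::nat \<Rightarrow> complex poly).
          MPS hb2 \<and> MPS ha1 \<and> MPS hc1 \<and>
          (\<forall>n. b2 (n+\<kappa>) = smult (\<mu>1 n) (hb2 n)) \<and>
          (\<forall>n. a1 (n+\<kappa>) = smult (\<mu>2 n) (ha1 n)) \<and>
          (\<forall>n. c1 (n+\<kappa>) = smult (\<mu>3 n) (hc1 n)) \<and>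
          (\<exists>\<beta>::complex. \<beta> \<noteq> 0 \<and>
            (\<forall>n. \<mu>1 n = pochhammer (of_nat \<kappa> + 7/3) n * pochhammer (of_nat \<kappa> + 5/3) n
                   / (pochhammer (4/3) n * pochhammer (5/3) n)
                   * of_nat ((n+\<kappa>+1) choose n) * \<beta>) \<and>
            (\<forall>n\<ge>1. \<mu>2 n = pochhammer (of_nat \<kappa> + 7/3) (n-1) * pochhammer (of_nat \<kappa> + 5/3) n
                   / (pochhammer (4/3) n * pochhammer (5/3) (n-1))
                   * of_nat ((n+\<kappa>+1) choose n) * \<beta>) \<and>
            (\<forall>n\<ge>1. \<mu>3 n = pochhammer (of_nat \<kappa> + 7/3) (n-1) * pochhammer (of_nat \<kappa> + 5/3) n
                   / (pochhammer (4/3) (n-1) * pochhammer (5/3) (n-1))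
                   * of_nat ((n+\<kappa>) choose n) * (\<beta> / (of_nat \<kappa> + 1))) \<and>
            \<mu>2 0 = 2 * \<beta> / (3 * (of_nat \<kappa> + 4/3)) \<and>
            \<mu>3 0 = 2 * \<beta> / (9 * (of_nat \<kappa> + 1) * (of_nat \<kappa> + 4/3))))))
   \<and>
   (((\<forall>n. a2 n = 0) \<and> (\<forall>n. c2 n = 0) \<and> (\<forall>n. b1 n = 0))
    \<or> ((\<exists>n. a2 n \<noteq> 0) \<and> (\<exists>n. c2 n \<noteq> 0) \<and> (\<exists>n. b1 n \<noteq> 0) \<and>
       (\<exists>(\<tau>::nat) (\<alpha>1::nat \<Rightarrow> complex) (\<alpha>2::nat \<Rightarrow> complex) (\<alpha>3::nat \<Rightarrow> complex)
          (ha2::nat \<Rightarrow> complex poly) (hc2::nat \<Rightarrow> complex poly) (hb1::nat \<Rightarrow> complex poly).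
          MPS ha2 \<and> MPS hc2 \<and> MPS hb1 \<and>
          (\<forall>n. a2 (n+\<tau>) = smult (\<alpha>1 n) (ha2 n)) \<and>
          (\<forall>n. c2 (n+\<tau>) = smult (\<alpha>2 n) (hc2 n)) \<and>
          (\<forall>n. b1 (n+\<tau>) = smult (\<alpha>3 n) (hb1 n)) \<and>
          (\<exists>\<gamma>::complex. \<gamma> \<noteq> 0 \<and>
            (\<forall>n. \<alpha>1 n = pochhammer (of_nat \<tau> + 5/3) n * pochhammer (of_nat \<tau> + 4/3) n
                   / (pochhammer (4/3) n * pochhammer (5/3) n)
                   * of_nat ((n+\<tau>+1) choose n) * \<gamma>) \<and>
            (\<forall>n\<ge>1. \<alpha>2 n = pochhammer (of_nat \<tau> + 5/3) n * pochhammer (of_nat \<tau> + 4/3) n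
                   / (pochhammer (4/3) n * pochhammer (5/3) (n-1))
                   * of_nat ((n+\<tau>) choose n) * (\<gamma> / (of_nat \<tau> + 1))) \<and>
            (\<forall>n\<ge>1. \<alpha>3 n = pochhammer (of_nat \<tau> + 5/3) (n-1) * pochhammer (of_nat \<tau> + 4/3) n
                   / (pochhammer (4/3) (n-1) * pochhammer (5/3) (n-1))
                   * of_nat ((n+\<tau>) choose n) * (\<gamma> / (of_nat \<tau> + 1))) \<and>
            \<alpha>2 0 = 2 * \<gamma> / (3 * (of_nat \<tau> + 1)) \<and>
            \<alpha>3 0 = 2 * \<gamma> / (9 * (of_nat \<tau> + 1) * (of_nat \<tau> + 2/3)))))))"
proof -
  have W3: "W (3*m+3) = cube_sub (P (Suc m)) + [:0,1:] * cube_sub (a1 m)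
      + [:0,0,1:] * cube_sub (a2 m)" for m
    using dec0[of "Suc m"] by (simp add: add.commute)
  have W4: "W (3*m+4) = cube_sub (b1 (Suc m)) + [:0,1:] * cube_sub (Q (Suc m))
      + [:0,0,1:] * cube_sub (b2 m)" for m
    using dec1[of "Suc m"] by (simp add: add.commute)
  have a1_coeffs: "has_binomial_coeffs a1 3 1 (\<lambda>i. coeff (W (3*i+2)) 0)"
    by (rule appell_has_binomial_coeffs[OF appell],
        simp only: W3 coeff_cubic_combination, simp_all)
  have c1_coeffs: "has_binomial_coeffs c1 2 0 (\<lambda>i. coeff (W (3*i+2)) 0)"
    by (rule appell_has_binomial_coeffs[OF appell],
        simp only: dec2 coeff_cubic_combination add_0_right, simp_all)
  have b2_coeffs: "has_binomial_coeffs b2 4 2 (\<lambda>i. coeff (W (3*i+2)) 0)"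
    by (rule appell_has_binomial_coeffs[OF appell],
        simp only: W4 coeff_cubic_combination, simp_all)
  have a2_coeffs: "has_binomial_coeffs a2 3 2 (\<lambda>i. coeff (W (3*i+1)) 0)"
    by (rule appell_has_binomial_coeffs[OF appell],
        simp only: W3 coeff_cubic_combination, simp_all)
  have c2_coeffs: "has_binomial_coeffs c2 2 1 (\<lambda>i. coeff (W (3*i+1)) 0)"
    by (rule appell_has_binomial_coeffs[OF appell],
        simp only: dec2 coeff_cubic_combination, simp_all)
  have b1_coeffs: "has_binomial_coeffs b1 1 0 (\<lambda>i. coeff (W (3*i+1)) 0)"
    by (rule appell_has_binomial_coeffs[OF appell],
        simp only: dec1 coeff_cubic_combination add_0_right, simp_all)
  show ?thesis
    using a1_c1_b2_normal_form[OF a1_coeffs c1_coeffs b2_coeffs]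
      a2_c2_b1_normal_form[OF a2_coeffs c2_coeffs b1_coeffs]
    by (rule conjI)
qed

end
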